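(* If an ES basic fusion operator $\nabla$ satisfies (ESF-U) and (ESF-I), then it satisfies (ESF-P).
   Context: Setting: epistemic space $(\mathcal E,B,\mathcal L_{\mathcal P})$ ($\mathcal E$ nonempty, $B:\mathcal E\to$ propositional formulas over finite $\mathcal P$, image modulo equivalence exactly the consistent formulas); agents: well-ordered set $\mathcal S$; society: nonempty finite $N\subseteq\mathcal S$; $N$-profile $\Phi:N\to\mathcal E$, $E_i=\Phi(i)$, identified with $E_i$ if $N=\{i\}$; profiles on $\{i_1<\dots<i_n\}$, $\{j_1<\dots<j_m\}$ equivalent if $n=m$ and entries coincide position-wise. ES basic fusion operator: a map $\nabla(\Phi,E)\in\mathcal E$ with (ESF1) $B(\nabla(\Phi,E))\vdash B(E)$; (ESF2) equivalent profiles and $B(E)\equiv B(E')$ give equivalent $B(\nabla)$; (ESF3) if $B(E)\equiv B(E')\wedge B(E'')$ then $B(\nabla(\Phi,E'))\wedge B(E'')\vdash B(\nabla(\Phi,E))$; (ESF4) if moreover $B(\nabla(\Phi,E'))\wedge B(E'')\nvdash\bot$ then $B(\nabla(\Phi,E))\vdash B(\nabla(\Phi,E'))\wedge B(E'')$. (ESF-U): for every society $N$, $N$-profile $\Phi$, $E$: if $E_i=E_j$ for all $i,j\in N$ then $B(\nabla(\Phi,E))\equiv B(\nabla(E_i,E))$ for all $i\in N$. (ESF-I): for every $N$, $N$-profiles $\Phi,\Phi'$ and $E$, if for every $E'$ with $B(E')\vdash B(E)$ one has $B(\nabla(E_j,E'))\equiv B(\nabla(E'_j,E'))$ for all $j\in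 N$, then $B(\nabla(\Phi,E))\equiv B(\nabla(\Phi',E))$. (ESF-P): for every $N$, $N$-profile $\Phi$, $E,E'$: if $\bigwedge_{i\in N}B(\nabla(E_i,E))\nvdash\bot$ and $B(\nabla(E_i,E))\wedge B(E')\vdash\bot$ for all $i\in N$, then $B(\nabla(\Phi,E))\wedge B(E')\vdash\bot$. *)

theory Defs
  imports Main
begin

datatype 'p form =
    Atom 'p
  | FBot
  | FTop
  | Neg "'p form"
  | FAnd "'p form" "'p form"
  | FOr "'p form" "'p form"
  | FImp "'p form" "'p form"

fun sat :: "('p \<Rightarrow> bool) \<Rightarrow> 'p form \<Rightarrow> bool" where
  "sat v (Atom p) = v p"
| "sat v FBot = False"
| "sat v FTop = True"
| "sat v (Neg f) = (\<not> sat v f)"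
| "sat v (FAnd f g) = (sat v f \<and> sat v g)"
| "sat v (FOr f g) = (sat v f \<or> sat v g)"
| "sat v (FImp f g) = (sat v f \<longrightarrow> sat v g)"

definition entails :: "'p form \<Rightarrow> 'p form \<Rightarrow> bool" (infix "\<turnstile>" 55) where
  "f \<turnstile> g \<longleftrightarrow> (\<forall>v. sat v f \<longrightarrow> sat v g)"

definition equiv_form :: "'p form \<Rightarrow> 'p form \<Rightarrow> bool" (infix "\<equiv>\<^sub>F" 55) where
  "f \<equiv>\<^sub>F g \<longleftrightarrow> f \<turnstile> g \<and> g \<turnstile> f"

definition consistent :: "'p form \<Rightarrow> bool" where
  "consistent f \<longleftrightarrow> \<not> (f \<turnstile> FBot)"

definition BigAnd :: "'p form list \<Rightarrow> 'p form" where
  "BigAnd fs = foldr FAnd fs FTop"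

text \<open>The set of epistemic states is the (nonempty) type 'e; B maps states to formulas;
  the image of B modulo equivalence is exactly the consistent formulas.\<close>
definition epistemic_space :: "('e \<Rightarrow> 'p::finite form) \<Rightarrow> bool" where
  "epistemic_space B \<longleftrightarrow>
     (\<forall>e. consistent (B e)) \<and> (\<forall>f. consistent f \<longrightarrow> (\<exists>e. B e \<equiv>\<^sub>F f))"

text \<open>Agents form a well-ordered type 's. A profile is a partial map whose domain is
  the society N (finite and nonempty); an N-profile is a profile with domain N.\<close>
definition is_profile :: "('s \<rightharpoonup> 'e) \<Rightarrow> bool" where
  "is_profile \<Phi> \<longleftrightarrow> finite (dom \<Phi>) \<and> dom \<Phi> \<noteq> {}"

definition single :: "'s \<Rightarrow> 'e \<Rightarrow> ('s \<rightharpoonup> 'e)" where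
  "single i E = [i \<mapsto> E]"

definition profile_equiv :: "('s::wellorder \<rightharpoonup> 'e) \<Rightarrow> ('s \<rightharpoonup> 'e) \<Rightarrow> bool" where
  "profile_equiv \<Phi> \<Phi>' \<longleftrightarrow>
     map (\<lambda>i. the (\<Phi> i)) (sorted_list_of_set (dom \<Phi>)) =
     map (\<lambda>i. the (\<Phi>' i)) (sorted_list_of_set (dom \<Phi>'))"

definition ES_basic_fusion ::
  "('e \<Rightarrow> 'p::finite form) \<Rightarrow> (('s::wellorder \<rightharpoonup> 'e) \<Rightarrow> 'e \<Rightarrow> 'e) \<Rightarrow> bool" where
  "ES_basic_fusion B fus \<longleftrightarrow>
     \<comment> \<open>ESF1\<close>
     (\<forall>\<Phi> E. is_profile \<Phi> \<longrightarrow> B (fus \<Phi> E) \<turnstile> B E) \<and>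
     \<comment> \<open>ESF2\<close>
     (\<forall>\<Phi> \<Phi>' E E'. is_profile \<Phi> \<longrightarrow> is_profile \<Phi>' \<longrightarrow> profile_equiv \<Phi> \<Phi>' \<longrightarrow>
        B E \<equiv>\<^sub>F B E' \<longrightarrow> B (fus \<Phi> E) \<equiv>\<^sub>F B (fus \<Phi>' E')) \<and>
     \<comment> \<open>ESF3\<close>
     (\<forall>\<Phi> E E' E''. is_profile \<Phi> \<longrightarrow> B E \<equiv>\<^sub>F FAnd (B E') (B E'') \<longrightarrow>
        FAnd (B (fus \<Phi> E')) (B E'') \<turnstile> B (fus \<Phi> E)) \<and>
     \<comment> \<open>ESF4\<close>
     (\<forall>\<Phi> E E' E''. is_profile \<Phi> \<longrightarrow> B E \<equiv>\<^sub>F FAnd (B E') (B E'') \<longrightarrow>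
        consistent (FAnd (B (fus \<Phi> E')) (B E'')) \<longrightarrow>
        B (fus \<Phi> E) \<turnstile> FAnd (B (fus \<Phi> E')) (B E''))"

definition ESF_U ::
  "('e \<Rightarrow> 'p::finite form) \<Rightarrow> (('s::wellorder \<rightharpoonup> 'e) \<Rightarrow> 'e \<Rightarrow> 'e) \<Rightarrow> bool" where
  "ESF_U B fus \<longleftrightarrow>
     (\<forall>\<Phi> E. is_profile \<Phi> \<longrightarrow>
        (\<forall>i\<in>dom \<Phi>. \<forall>j\<in>dom \<Phi>. \<Phi> i = \<Phi> j) \<longrightarrow>
        (\<forall>i\<in>dom \<Phi>. B (fus \<Phi> E) \<equiv>\<^sub>F B (fus (single i (the (\<Phi> i))) E)))"

definition ESF_I ::
  "('e \<Rightarrow> 'p::finite form) \<Rightarrow> (('s::wellorder \<rightharpoonup> 'e) \<Rightarrow> 'e \<Rightarrow> 'e) \<Rightarrow> bool" where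
  "ESF_I B fus \<longleftrightarrow>
     (\<forall>\<Phi> \<Phi>' E. is_profile \<Phi> \<longrightarrow> dom \<Phi>' = dom \<Phi> \<longrightarrow>
        (\<forall>E'. B E' \<turnstile> B E \<longrightarrow>
           (\<forall>j\<in>dom \<Phi>. B (fus (single j (the (\<Phi> j))) E') \<equiv>\<^sub>F
                       B (fus (single j (the (\<Phi>' j))) E'))) \<longrightarrow>
        B (fus \<Phi> E) \<equiv>\<^sub>F B (fus \<Phi>' E))"

definition ESF_P ::
  "('e \<Rightarrow> 'p::finite form) \<Rightarrow> (('s::wellorder \<rightharpoonup> 'e) \<Rightarrow> 'e \<Rightarrow> 'e) \<Rightarrow> bool" where
  "ESF_P B fus \<longleftrightarrow>
     (\<forall>\<Phi> E E'. is_profile \<Phi> \<longrightarrow>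
        consistent (BigAnd (map (\<lambda>i. B (fus (single i (the (\<Phi> i))) E))
                               (sorted_list_of_set (dom \<Phi>)))) \<longrightarrow>
        (\<forall>i\<in>dom \<Phi>. FAnd (B (fus (single i (the (\<Phi> i))) E)) (B E') \<turnstile> FBot) \<longrightarrow>
        FAnd (B (fus \<Phi> E)) (B E') \<turnstile> FBot)"

end

theory Submission
  imports Defs
begin

text \<open>Suppose every agent's individual revision of \<open>E\<close> contains a world \<open>w\<close> and excludes a
  world \<open>w'\<close>. Revising instead by a state whose models are exactly \<open>{w, w'}\<close>, (ESF3/4) force
  every agent to end up with \<open>{w}\<close>, whatever its own state. By (ESF-I) the profile may then be
  replaced by the uniform one, and by (ESF-U) its fusion is that of a single agent, again \<open>{w}\<close>.
  On the other hand (ESF3/4) make the fused revision by \<open>{w, w'}\<close> the restriction of the fused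
  revision by \<open>E\<close>; so \<open>w'\<close> cannot be in the latter.\<close>

definition models :: "'p form \<Rightarrow> ('p \<Rightarrow> bool) set" where
  "models f = {v. sat v f}"

lemma entails_iff_models_subset: "f \<turnstile> g \<longleftrightarrow> models f \<subseteq> models g"
  by (auto simp: entails_def models_def)

lemma equiv_form_iff_models_eq: "f \<equiv>\<^sub>F g \<longleftrightarrow> models f = models g"
  by (auto simp: equiv_form_def entails_def models_def)

lemma consistent_iff_models_nonempty: "consistent f \<longleftrightarrow> models f \<noteq> {}"
  by (auto simp: consistent_def entails_def models_def)

lemma models_simps [simp]:
  "models FBot = {}"
  "models (FAnd f g) = models f \<inter> models g"
  "models (FOr f g) = models f \<union> models g"
  by (auto simp: models_def)

lemma sat_foldr_FAnd: "sat v (foldr FAnd fs FTop) \<longleftrightarrow> (\<forall>f\<in>set fs. sat v f)"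
  by (induction fs) auto

lemma models_foldr_FOr: "models (foldr FOr fs FBot) = (\<Union>f\<in>set fs. models f)"
  by (induction fs) auto

lemma models_BigAnd: "models (BigAnd fs) = (\<Inter>f\<in>set fs. models f)"
  by (auto simp: BigAnd_def sat_foldr_FAnd models_def)

definition char_form :: "('p::finite \<Rightarrow> bool) \<Rightarrow> 'p form" where
  "char_form w = foldr FAnd (map (\<lambda>p. if w p then Atom p else Neg (Atom p))
                              (SOME ps. set ps = UNIV)) FTop"

lemma sat_char_form: "sat v (char_form w) \<longleftrightarrow> v = w"
proof -
  have all_atoms: "set (SOME ps. set ps = (UNIV :: 'a set)) = UNIV"
    using finite_list[OF finite_UNIV] by (rule someI_ex)
  have "sat v (char_form w) \<longleftrightarrow> (\<forall>p. sat v (if w p then Atom p else Neg (Atom p)))"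
    unfolding char_form_def sat_foldr_FAnd set_map all_atoms by blast
  also have "\<dots> \<longleftrightarrow> (\<forall>p. v p = w p)"
    by (intro all_cong1) simp
  finally show ?thesis
    by (simp add: fun_eq_iff)
qed

lemma models_char_form: "models (char_form w) = {w}"
  by (auto simp: models_def sat_char_form)

lemma epistemic_space_realises_models:
  fixes W :: "('p::finite \<Rightarrow> bool) set"
  assumes "epistemic_space B" and "W \<noteq> {}"
  obtains E where "models (B E) = W"
proof -
  obtain ws where ws: "set ws = W"
    using finite_list[OF finite_subset[OF subset_UNIV finite_UNIV]] by blast
  let ?f = "foldr FOr (map char_form ws) FBot"
  have f: "models ?f = W"
    by (simp add: models_foldr_FOr models_char_form ws)
  then have "consistent ?f"
    using assms(2) by (simp add: consistent_iff_models_nonempty)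
  then obtain E where "B E \<equiv>\<^sub>F ?f"
    using assms(1) by (auto simp: epistemic_space_def)
  then show ?thesis
    using f that by (simp add: equiv_form_iff_models_eq)
qed

lemma is_profile_single: "is_profile (single i E)"
  by (simp add: is_profile_def single_def)

lemma profile_equiv_single: "profile_equiv (single i E) (single j E)"
  by (simp add: profile_equiv_def single_def)

locale es_fusion =
  fixes B :: "'e \<Rightarrow> 'p::finite form"
    and fus :: "('s::wellorder \<rightharpoonup> 'e) \<Rightarrow> 'e \<Rightarrow> 'e"
  assumes epistemic_space: "epistemic_space B"
    and basic_fusion: "ES_basic_fusion B fus"
begin

lemmas ESF1 = basic_fusion[unfolded ES_basic_fusion_def, THEN conjunct1, rule_format]
lemmas ESF2 = basic_fusion[unfolded ES_basic_fusion_def, THEN conjunct2, THEN conjunct1, rule_format]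
lemmas ESF3 = basic_fusion[unfolded ES_basic_fusion_def, THEN conjunct2, THEN conjunct2,
                           THEN conjunct1, rule_format]
lemmas ESF4 = basic_fusion[unfolded ES_basic_fusion_def, THEN conjunct2, THEN conjunct2,
                           THEN conjunct2, rule_format]

lemma fusion_models_subset:
  "is_profile \<Phi> \<Longrightarrow> models (B (fus \<Phi> E)) \<subseteq> models (B E)"
  using ESF1 by (simp add: entails_iff_models_subset)

lemma fusion_models_nonempty: "models (B (fus \<Phi> E)) \<noteq> {}"
  using epistemic_space by (simp add: epistemic_space_def consistent_iff_models_nonempty)

lemma fusion_single_agent_irrelevant:
  "models (B (fus (single i F) E)) = models (B (fus (single j F) E))"
proof -
  have "B (fus (single i F) E) \<equiv>\<^sub>F B (fus (single j F) E)"
    by (rule ESF2[OF is_profile_single is_profile_single profile_equiv_single])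
       (simp add: equiv_form_iff_models_eq)
  then show ?thesis
    by (simp add: equiv_form_iff_models_eq)
qed

lemma fusion_restrict:
  assumes \<Phi>: "is_profile \<Phi>" and "models (B E') \<subseteq> models (B E)"
    and meets: "models (B (fus \<Phi> E)) \<inter> models (B E') \<noteq> {}"
  shows "models (B (fus \<Phi> E')) = models (B (fus \<Phi> E)) \<inter> models (B E')"
proof -
  have restrict: "B E' \<equiv>\<^sub>F FAnd (B E) (B E')"
    using assms(2) by (auto simp: equiv_form_iff_models_eq)
  have "consistent (FAnd (B (fus \<Phi> E)) (B E'))"
    using meets by (simp add: consistent_iff_models_nonempty)
  then have "B (fus \<Phi> E') \<turnstile> FAnd (B (fus \<Phi> E)) (B E')"
    by (rule ESF4[OF \<Phi> restrict])
  moreover have "FAnd (B (fus \<Phi> E)) (B E') \<turnstile> B (fus \<Phi> E')"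
    by (rule ESF3[OF \<Phi> restrict])
  ultimately show ?thesis
    unfolding entails_iff_models_subset models_simps by blast
qed

lemma fusion_restrict_to_pair:
  assumes "is_profile \<Phi>" and "models (B E') \<subseteq> {w, w'}" and "{w, w'} \<subseteq> models (B E)"
    and "w \<in> models (B (fus \<Phi> E))" and "w' \<notin> models (B (fus \<Phi> E))"
  shows "models (B (fus \<Phi> E')) = (if w \<in> models (B E') then {w} else {w'})"
proof (cases "w \<in> models (B E')")
  case True
  then have "models (B (fus \<Phi> E')) = models (B (fus \<Phi> E)) \<inter> models (B E')"
    using assms by (intro fusion_restrict) auto
  then show ?thesis
    using True assms(2,4,5) by auto
next
  case False
  then show ?thesis
    using assms(1,2) fusion_models_subset[of \<Phi> E'] fusion_models_nonempty[of \<Phi> E'] by auto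
qed

lemma fusion_by_pair_of_unanimous_worlds:
  assumes U: "ESF_U B fus" and I: "ESF_I B fus" and \<Phi>: "is_profile \<Phi>"
    and accepted: "\<forall>i\<in>dom \<Phi>. w \<in> models (B (fus (single i (the (\<Phi> i))) E))"
    and rejected: "\<forall>i\<in>dom \<Phi>. w' \<notin> models (B (fus (single i (the (\<Phi> i))) E))"
    and pair: "{w, w'} \<subseteq> models (B E)" and E2: "models (B E2) = {w, w'}"
  shows "models (B (fus \<Phi> E2)) = {w}"
proof -
  obtain j where j: "j \<in> dom \<Phi>"
    using \<Phi> by (auto simp: is_profile_def)
  define F where "F = the (\<Phi> j)"
  define \<Phi>' where "\<Phi>' = (\<lambda>_. Some F) |` dom \<Phi>"
  have dom': "dom \<Phi>' = dom \<Phi>"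
    by (simp add: \<Phi>'_def)
  have individual: "models (B (fus (single i G) E')) = (if w \<in> models (B E') then {w} else {w'})"
    if "w \<in> models (B (fus (single i G) E))" "w' \<notin> models (B (fus (single i G) E))"
      and "models (B E') \<subseteq> models (B E2)" for i G E'
    using that E2 by (intro fusion_restrict_to_pair[OF is_profile_single _ pair]) auto
  have F_accepts: "w \<in> models (B (fus (single i F) E))"
    and F_rejects: "w' \<notin> models (B (fus (single i F) E))" for i
    using accepted rejected j fusion_single_agent_irrelevant[of i F E j] by (auto simp: F_def)
  have "B (fus \<Phi> E2) \<equiv>\<^sub>F B (fus \<Phi>' E2)"
  proof (rule I[unfolded ESF_I_def, rule_format, OF \<Phi> dom'])
    fix E' i
    assume "B E' \<turnstile> B E2" and i: "i \<in> dom \<Phi>"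
    then have E': "models (B E') \<subseteq> models (B E2)"
      by (simp add: entails_iff_models_subset)
    have "the (\<Phi>' i) = F"
      using i by (simp add: \<Phi>'_def)
    moreover have "models (B (fus (single i (the (\<Phi> i))) E')) = models (B (fus (single i F) E'))"
      using individual[OF _ _ E'] accepted rejected i F_accepts F_rejects by simp
    ultimately show "B (fus (single i (the (\<Phi> i))) E') \<equiv>\<^sub>F B (fus (single i (the (\<Phi>' i))) E')"
      by (simp add: equiv_form_iff_models_eq)
  qed
  moreover have "B (fus \<Phi>' E2) \<equiv>\<^sub>F B (fus (single j (the (\<Phi>' j))) E2)"
  proof (rule U[unfolded ESF_U_def, rule_format])
    show "is_profile \<Phi>'"
      using \<Phi> dom' by (simp add: is_profile_def)
    show "\<Phi>' i = \<Phi>' k" if "i \<in> dom \<Phi>'" and "k \<in> dom \<Phi>'" for i k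
      using that by (simp add: \<Phi>'_def)
    show "j \<in> dom \<Phi>'"
      using j dom' by simp
  qed
  moreover have "the (\<Phi>' j) = F"
    using j by (simp add: \<Phi>'_def)
  ultimately show ?thesis
    using individual[OF F_accepts F_rejects] E2 by (simp add: equiv_form_iff_models_eq)
qed

lemma fusion_excludes_unanimously_rejected_world:
  assumes U: "ESF_U B fus" and I: "ESF_I B fus" and \<Phi>: "is_profile \<Phi>"
    and accepted: "\<forall>i\<in>dom \<Phi>. w \<in> models (B (fus (single i (the (\<Phi> i))) E))"
    and rejected: "\<forall>i\<in>dom \<Phi>. w' \<notin> models (B (fus (single i (the (\<Phi> i))) E))"
  shows "w' \<notin> models (B (fus \<Phi> E))"
proof
  assume w': "w' \<in> models (B (fus \<Phi> E))"
  obtain j where j: "j \<in> dom \<Phi>"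
    using \<Phi> by (auto simp: is_profile_def)
  then have "w \<noteq> w'"
    using accepted rejected by blast
  have pair: "{w, w'} \<subseteq> models (B E)"
    using accepted j w' fusion_models_subset[OF is_profile_single] fusion_models_subset[OF \<Phi>]
    by blast
  obtain E2 where E2: "models (B E2) = {w, w'}"
    using epistemic_space_realises_models[OF epistemic_space, of "{w, w'}"] by blast
  have "models (B (fus \<Phi> E2)) = {w}"
    by (rule fusion_by_pair_of_unanimous_worlds[OF U I \<Phi> accepted rejected pair E2])
  moreover have "models (B (fus \<Phi> E2)) = models (B (fus \<Phi> E)) \<inter> {w, w'}"
    using fusion_restrict[OF \<Phi>, of E2 E] E2 pair w' by auto
  ultimately show False
    using w' \<open>w \<noteq> w'\<close> by auto
qed

end

theorem mainTheorem12:
  fixes B :: "'e \<Rightarrow> 'p::finite form"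
    and fus :: "('s::wellorder \<rightharpoonup> 'e) \<Rightarrow> 'e \<Rightarrow> 'e"
  assumes "epistemic_space B"
    and "ES_basic_fusion B fus"
    and "ESF_U B fus"
    and "ESF_I B fus"
  shows "ESF_P B fus"
  unfolding ESF_P_def
proof (intro allI impI)
  interpret es_fusion B fus
    using assms(1,2) by unfold_locales
  fix \<Phi> :: "'s \<rightharpoonup> 'e" and E E'
  assume \<Phi>: "is_profile \<Phi>"
    and "consistent (BigAnd (map (\<lambda>i. B (fus (single i (the (\<Phi> i))) E))
                               (sorted_list_of_set (dom \<Phi>))))"
    and disjoint: "\<forall>i\<in>dom \<Phi>. FAnd (B (fus (single i (the (\<Phi> i))) E)) (B E') \<turnstile> FBot"
  then obtain w where w: "\<forall>i\<in>dom \<Phi>. w \<in> models (B (fus (single i (the (\<Phi> i))) E))"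
    by (auto simp: consistent_iff_models_nonempty models_BigAnd is_profile_def)
  have "w' \<notin> models (B (fus \<Phi> E))" if "w' \<in> models (B E')" for w'
    using that disjoint
    by (intro fusion_excludes_unanimously_rejected_world[OF assms(3,4) \<Phi> w])
       (auto simp: entails_iff_models_subset)
  then show "FAnd (B (fus \<Phi> E)) (B E') \<turnstile> FBot"
    by (auto simp: entails_iff_models_subset)
qed

end
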